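(* Let $l\geq 1$ and let $c_1,\dots,c_l$ and $d_1,\dots,d_l$ be positive integers. Let $u$ be a vertex of a graph $G$ such that $G$ contains a path $P_{\max\{c_1,\dots,c_l\}+1}$ as a proper subgraph, with $u$ as one of its end vertices. Let $P_{d_1+1},\dots,P_{d_l+1}$ be paths that are mutually vertex-disjoint and vertex-disjoint from $G$, and let $v_i$ be an end vertex of $P_{d_i+1}$ for $i=1,\dots,l$. Then for every $k\geq 0$, $$M_k\big(G(u=v_1)P_{d_1+1}\cdots(u=v_l)P_{d_l+1}\big)\geq M_k(G)+\sum_{i=1}^l\left(M_k(P_{c_i+d_i+1})-M_k(P_{c_i+1})\right).$$
   Context: $P_m$ denotes the path on $m$ vertices. $M_k(H)$ is the number of closed walks of length $k$ in a graph $H$. The coalescence $G(u=v)H$ of vertex-disjoint graphs $G$ and $H$ with respect to a vertex $u$ of $G$ and a vertex $v$ of $H$ is obtained from the disjoint union by identifying $u$ and $v$; $G(u=v_1)P_{d_1+1}\cdots(u=v_l)P_{d_l+1}$ denotes the graph obtained from the disjoint union of $G,P_{d_1+1},\dots,P_{d_l+1}$ by identifying $u,v_1,\dots,v_l$ into a single vertex (i.e. attaching all the paths at $u$ by an end vertex). *)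

theory Defs
  imports Main
begin

definition simple_graph :: "'a set \<Rightarrow> ('a \<Rightarrow> 'a \<Rightarrow> bool) \<Rightarrow> bool" where
  "simple_graph V E \<longleftrightarrow> finite V \<and> (\<forall>x y. E x y \<longrightarrow> x \<in> V \<and> y \<in> V)
     \<and> (\<forall>x y. E x y \<longrightarrow> E y x) \<and> (\<forall>x. \<not> E x x)"

definition closed_walks :: "'a set \<Rightarrow> ('a \<Rightarrow> 'a \<Rightarrow> bool) \<Rightarrow> nat \<Rightarrow> 'a list set" where
  "closed_walks V E k = {w. length w = Suc k \<and> set w \<subseteq> V
      \<and> (\<forall>i<k. E (w ! i) (w ! Suc i)) \<and> w ! k = w ! 0}"

definition M :: "nat \<Rightarrow> 'a set \<Rightarrow> ('a \<Rightarrow> 'a \<Rightarrow> bool) \<Rightarrow> nat" where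
  "M k V E = card (closed_walks V E k)"

definition path_V :: "nat \<Rightarrow> nat set" where
  "path_V m = {0..<m}"

definition path_E :: "nat \<Rightarrow> nat \<Rightarrow> nat \<Rightarrow> bool" where
  "path_E m i j \<longleftrightarrow> i < m \<and> j < m \<and> (j = Suc i \<or> i = Suc j)"

definition M_path :: "nat \<Rightarrow> nat \<Rightarrow> nat" where
  "M_path k m = M k (path_V m) (path_E m)"

text \<open>G contains the path xs!0 - xs!1 - ... - xs!c (a copy of P_{c+1}) as a subgraph,
  with end vertex u = xs!0, and this subgraph is not all of G.\<close>
definition has_proper_end_path :: "'a set \<Rightarrow> ('a \<Rightarrow> 'a \<Rightarrow> bool) \<Rightarrow> 'a \<Rightarrow> nat \<Rightarrow> bool" where
  "has_proper_end_path V E u c \<longleftrightarrow> (\<exists>xs. length xs = Suc c \<and> distinct xs \<and> set xs \<subseteq> V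
      \<and> xs ! 0 = u \<and> (\<forall>j<c. E (xs ! j) (xs ! Suc j))
      \<and> \<not> (set xs = V \<and> (\<forall>a b. E a b \<longrightarrow> (\<exists>j<c. {a, b} = {xs ! j, xs ! Suc j}))))"

text \<open>Coalescence G(u=v_1)P_{d_1+1}...(u=v_l)P_{d_l+1}: the vertex u is the common end
  vertex of all attached paths; the remaining vertices of the i-th path are Inr (i, j),
  1 <= j <= d i, where j is the distance from u along that path.\<close>
definition coal_V :: "'a set \<Rightarrow> nat \<Rightarrow> (nat \<Rightarrow> nat) \<Rightarrow> ('a + nat \<times> nat) set" where
  "coal_V V l d = Inl ` V \<union> {Inr (i, j) | i j. 1 \<le> i \<and> i \<le> l \<and> 1 \<le> j \<and> j \<le> d i}"

fun coal_E :: "('a \<Rightarrow> 'a \<Rightarrow> bool) \<Rightarrow> 'a \<Rightarrow> nat \<Rightarrow> (nat \<Rightarrow> nat)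
    \<Rightarrow> ('a + nat \<times> nat) \<Rightarrow> ('a + nat \<times> nat) \<Rightarrow> bool" where
  "coal_E E u l d (Inl a) (Inl b) = E a b"
| "coal_E E u l d (Inl a) (Inr (i, j)) = (a = u \<and> 1 \<le> i \<and> i \<le> l \<and> j = 1 \<and> 1 \<le> d i)"
| "coal_E E u l d (Inr (i, j)) (Inl a) = (a = u \<and> 1 \<le> i \<and> i \<le> l \<and> j = 1 \<and> 1 \<le> d i)"
| "coal_E E u l d (Inr (i, j)) (Inr (i', j')) = (i = i' \<and> 1 \<le> i \<and> i \<le> l
      \<and> 1 \<le> j \<and> j \<le> d i \<and> 1 \<le> j' \<and> j' \<le> d i \<and> (j' = Suc j \<or> j = Suc j'))"

end

theory Submission
  imports Defs
begin

(* Closed walks of the coalescence H that stay in G are the images of the closed walks of G;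
  for each i, the closed walks of H that enter the i-th attached path and no other one form a
  further class, and all these classes are pairwise disjoint.  Given a path
  xs!0 = u, ..., xs!c in G, the path P_{c+d_i+1} embeds into H as xs!c, ..., xs!0 = u followed
  by the i-th attached path; under this embedding every closed walk of P_{c+d_i+1} that is not
  a closed walk of its prefix P_{c+1} lands in the i-th class. *)

lemma finite_closed_walks:
  assumes "finite V"
  shows "finite (closed_walks V E k)"
proof (rule finite_subset)
  show "closed_walks V E k \<subseteq> {w. set w \<subseteq> V \<and> length w = Suc k}"
    unfolding closed_walks_def by auto
  show "finite {w. set w \<subseteq> V \<and> length w = Suc k}"
    using finite_lists_length_eq[OF assms] .
qed

lemma closed_walks_map:
  assumes "\<forall>x\<in>V. f x \<in> V'"
    and "\<forall>a\<in>V. \<forall>b\<in>V. E a b \<longrightarrow> E' (f a) (f b)"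
    and "w \<in> closed_walks V E k"
  shows "map f w \<in> closed_walks V' E' k"
proof -
  have w: "length w = Suc k" "set w \<subseteq> V" "\<forall>i<k. E (w ! i) (w ! Suc i)" "w ! k = w ! 0"
    using assms(3) unfolding closed_walks_def by auto
  have "w ! i \<in> V" if "i \<le> k" for i
    using w(1,2) that nth_mem[of i w] by auto
  then have "\<forall>i<k. E' (map f w ! i) (map f w ! Suc i)"
    using assms(2) w(1,3) by simp
  then show ?thesis
    using w assms(1) unfolding closed_walks_def by auto
qed

lemma closed_walks_restrict:
  assumes "w \<in> closed_walks V' E' k"
    and "set w \<subseteq> V"
    and "\<forall>a\<in>V. \<forall>b\<in>V. E' a b \<longrightarrow> E a b"
  shows "w \<in> closed_walks V E k"
proof -
  have w: "length w = Suc k" "\<forall>i<k. E' (w ! i) (w ! Suc i)" "w ! k = w ! 0"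
    using assms(1) unfolding closed_walks_def by auto
  have "w ! i \<in> V" if "i \<le> k" for i
    using w(1) assms(2) that nth_mem[of i w] by auto
  then have "\<forall>i<k. E (w ! i) (w ! Suc i)"
    using assms(3) w(2) by simp
  then show ?thesis
    using w assms(2) unfolding closed_walks_def by simp
qed

lemma inj_on_map_closed_walks:
  assumes "inj_on f V"
  shows "inj_on (map f) (closed_walks V E k)"
proof (rule inj_onI)
  fix w w' assume "w \<in> closed_walks V E k" "w' \<in> closed_walks V E k" "map f w = map f w'"
  moreover from this have "set w \<union> set w' \<subseteq> V"
    unfolding closed_walks_def by auto
  ultimately show "w = w'"
    using inj_on_map_eq_map inj_on_subset[OF assms] by blast
qed

lemma closed_walks_path_mono:
  assumes "m \<le> n"
  shows "closed_walks (path_V m) (path_E m) k \<subseteq> closed_walks (path_V n) (path_E n) k"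
proof
  fix w assume "w \<in> closed_walks (path_V m) (path_E m) k"
  then have "map id w \<in> closed_walks (path_V n) (path_E n) k"
    by (rule closed_walks_map[rotated 2]) (use assms in \<open>auto simp: path_V_def path_E_def\<close>)
  then show "w \<in> closed_walks (path_V n) (path_E n) k" by simp
qed

lemma M_path_mono:
  assumes "m \<le> n"
  shows "M_path k m \<le> M_path k n"
  unfolding M_path_def M_def
  by (rule card_mono[OF finite_closed_walks closed_walks_path_mono[OF assms]])
    (simp add: path_V_def)

lemma closed_walk_leaves_path_prefix:
  assumes "w \<in> closed_walks (path_V n) (path_E n) k - closed_walks (path_V m) (path_E m) k"
  shows "\<exists>x\<in>set w. m \<le> x"
proof (rule ccontr)
  assume "\<not> (\<exists>x\<in>set w. m \<le> x)"
  then have "set w \<subseteq> path_V m" by (auto simp: path_V_def)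
  moreover have "\<forall>a\<in>path_V m. \<forall>b\<in>path_V m. path_E n a b \<longrightarrow> path_E m a b"
    by (auto simp: path_V_def path_E_def)
  ultimately have "w \<in> closed_walks (path_V m) (path_E m) k"
    using assms closed_walks_restrict by blast
  then show False using assms by blast
qed

lemma coal_V_alt_def: "coal_V V l d = Inl ` V \<union> Inr ` (SIGMA i:{1..l}. {1..d i})"
  unfolding coal_V_def by auto

lemma finite_coal_V: "finite V \<Longrightarrow> finite (coal_V V l d)"
  unfolding coal_V_alt_def by auto

lemma coal_E_sym:
  assumes "\<And>a b. E a b \<Longrightarrow> E b a"
  shows "coal_E E u l d x y \<Longrightarrow> coal_E E u l d y x"
  using assms by (cases x; cases y) auto

definition walks_into_branch ::
    "'a set \<Rightarrow> ('a \<Rightarrow> 'a \<Rightarrow> bool) \<Rightarrow> 'a \<Rightarrow> nat \<Rightarrow> (nat \<Rightarrow> nat) \<Rightarrow> nat \<Rightarrow> nat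
      \<Rightarrow> ('a + nat \<times> nat) list set" where
  "walks_into_branch V E u l d i k = {w \<in> closed_walks (coal_V V l d) (coal_E E u l d) k.
      (\<exists>j. Inr (i, j) \<in> set w) \<and> (\<forall>i' j. Inr (i', j) \<in> set w \<longrightarrow> i' = i)}"

lemma M_coal_ge_branches:
  assumes "finite V"
  shows "M k V E + (\<Sum>i=1..l. card (walks_into_branch V E u l d i k))
           \<le> M k (coal_V V l d) (coal_E E u l d)"
proof -
  define H where "H = closed_walks (coal_V V l d) (coal_E E u l d) k"
  define A0 :: "('a + nat \<times> nat) list set" where "A0 = map Inl ` closed_walks V E k"
  define A where "A i = walks_into_branch V E u l d i k" for i
  have "finite H"
    unfolding H_def using finite_closed_walks finite_coal_V assms by blast
  have "map Inl w \<in> H" if "w \<in> closed_walks V E k" for w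
    unfolding H_def by (rule closed_walks_map[OF _ _ that]) (auto simp: coal_V_def)
  then have A0_H: "A0 \<subseteq> H"
    unfolding A0_def by blast
  have A_H: "A i \<subseteq> H" for i
    unfolding A_def H_def walks_into_branch_def by blast
  have "card A0 = M k V E"
    unfolding A0_def M_def by (simp add: card_image inj_on_map_closed_walks)
  have A0_A_disjoint: "A0 \<inter> A i = {}" for i
    unfolding A0_def A_def walks_into_branch_def by auto
  have A_A_disjoint: "A i \<inter> A j = {}" if "i \<noteq> j" for i j
    unfolding A_def walks_into_branch_def using that by blast
  have "finite A0" "\<And>i. finite (A i)"
    using \<open>finite H\<close> A0_H A_H finite_subset by blast+
  then have "card A0 + (\<Sum>i=1..l. card (A i)) = card A0 + card (\<Union>i\<in>{1..l}. A i)"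
    using A_A_disjoint by (simp add: card_UN_disjoint)
  also have "\<dots> = card (A0 \<union> (\<Union>i\<in>{1..l}. A i))"
    using \<open>finite A0\<close> \<open>\<And>i. finite (A i)\<close> A0_A_disjoint
    by (intro card_Un_disjoint[symmetric]) auto
  also have "\<dots> \<le> card H"
    using \<open>finite H\<close> A0_H A_H by (intro card_mono) auto
  finally show ?thesis
    using \<open>card A0 = M k V E\<close> unfolding H_def A_def M_def by simp
qed

definition branch_path_embedding :: "'a list \<Rightarrow> nat \<Rightarrow> nat \<Rightarrow> nat \<Rightarrow> 'a + nat \<times> nat" where
  "branch_path_embedding xs c i m = (if m \<le> c then Inl (xs ! (c - m)) else Inr (i, m - c))"

lemma inj_branch_path_embedding:
  assumes "distinct xs" and "c < length xs"
  shows "inj (branch_path_embedding xs c i)"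
proof (rule injI)
  fix a b assume eq: "branch_path_embedding xs c i a = branch_path_embedding xs c i b"
  show "a = b"
  proof (cases "a \<le> c \<and> b \<le> c")
    case True
    then have "c - a = c - b"
      using eq assms nth_eq_iff_index_eq by (fastforce simp: branch_path_embedding_def)
    then show ?thesis using True by linarith
  qed (use eq in \<open>auto simp: branch_path_embedding_def split: if_splits\<close>)
qed

lemma branch_path_embedding_closed_walk:
  assumes "\<And>a b. E a b \<Longrightarrow> E b a"
    and "c < length xs" and "set xs \<subseteq> V" and "xs ! 0 = u"
    and "\<forall>j. Suc j < length xs \<longrightarrow> E (xs ! j) (xs ! Suc j)"
    and "i \<in> {1..l}"
    and "w \<in> closed_walks (path_V (c + d i + 1)) (path_E (c + d i + 1)) k"
  shows "map (branch_path_embedding xs c i) w \<in> closed_walks (coal_V V l d) (coal_E E u l d) k"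
proof (rule closed_walks_map[OF _ _ assms(7)])
  let ?f = "branch_path_embedding xs c i"
  have xs_V: "xs ! j \<in> V" if "j \<le> c" for j
    using assms(2,3) that nth_mem[of j xs] by auto
  show "\<forall>m\<in>path_V (c + d i + 1). ?f m \<in> coal_V V l d"
    using assms(6) xs_V by (auto simp: branch_path_embedding_def path_V_def coal_V_def)
  have step: "coal_E E u l d (?f m) (?f (Suc m))" if "Suc m < c + d i + 1" for m
  proof -
    consider "Suc m \<le> c" | "m = c" | "c < m" by linarith
    then show ?thesis
    proof cases
      case 1
      then have "Suc (c - Suc m) = c - m" and "c - m < length xs"
        using assms(2) by linarith+
      then have "E (xs ! (c - Suc m)) (xs ! (c - m))"
        using assms(5) by metis
      then show ?thesis using 1 assms(1) by (simp add: branch_path_embedding_def)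
    qed (use that assms(4,6) in \<open>auto simp: branch_path_embedding_def\<close>)
  qed
  show "\<forall>a\<in>path_V (c + d i + 1). \<forall>b\<in>path_V (c + d i + 1).
          path_E (c + d i + 1) a b \<longrightarrow> coal_E E u l d (?f a) (?f b)"
  proof (intro ballI impI)
    fix a b assume "path_E (c + d i + 1) a b"
    then consider "b = Suc a" "Suc a < c + d i + 1" | "a = Suc b" "Suc b < c + d i + 1"
      by (auto simp: path_E_def)
    then show "coal_E E u l d (?f a) (?f b)"
      by cases (use step coal_E_sym[of E, OF assms(1)] in blast)+
  qed
qed

lemma card_walks_into_branch_ge:
  assumes "finite V" and "\<And>a b. E a b \<Longrightarrow> E b a"
    and "c < length xs" and "distinct xs" and "set xs \<subseteq> V" and "xs ! 0 = u"
    and "\<forall>j. Suc j < length xs \<longrightarrow> E (xs ! j) (xs ! Suc j)"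
    and "i \<in> {1..l}"
  shows "M_path k (c + d i + 1) - M_path k (c + 1) \<le> card (walks_into_branch V E u l d i k)"
proof -
  let ?f = "branch_path_embedding xs c i"
  define B where "B = closed_walks (path_V (c + d i + 1)) (path_E (c + d i + 1)) k"
  define S where "S = closed_walks (path_V (c + 1)) (path_E (c + 1)) k"
  have "map ?f ` (B - S) \<subseteq> walks_into_branch V E u l d i k"
  proof
    fix w' assume "w' \<in> map ?f ` (B - S)"
    then obtain w where w: "w \<in> B - S" "w' = map ?f w" by blast
    obtain x where "x \<in> set w" "c + 1 \<le> x"
      using w(1) closed_walk_leaves_path_prefix unfolding B_def S_def by blast
    then have "Inr (i, x - c) \<in> set w'"
      using w(2) by (force simp: branch_path_embedding_def)
    moreover have "\<forall>i' j. Inr (i', j) \<in> set w' \<longrightarrow> i' = i"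
      using w(2) by (auto simp: branch_path_embedding_def split: if_splits)
    moreover have "w' \<in> closed_walks (coal_V V l d) (coal_E E u l d) k"
      using w branch_path_embedding_closed_walk[OF assms(2,3,5,6,7,8)] unfolding B_def by blast
    ultimately show "w' \<in> walks_into_branch V E u l d i k"
      unfolding walks_into_branch_def by blast
  qed
  moreover have "finite (walks_into_branch V E u l d i k)"
    using finite_closed_walks[OF finite_coal_V[OF assms(1)]]
    unfolding walks_into_branch_def by simp
  moreover have "S \<subseteq> B"
    unfolding B_def S_def by (simp add: closed_walks_path_mono)
  moreover have "finite S"
    unfolding S_def by (simp add: finite_closed_walks path_V_def)
  moreover have "inj_on (map ?f) B"
    unfolding B_def using inj_branch_path_embedding[OF assms(4,3)]
    by (intro inj_on_map_closed_walks) (meson inj_on_subset subset_UNIV)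
  ultimately have "card B - card S \<le> card (walks_into_branch V E u l d i k)"
    by (metis card_Diff_subset card_image card_mono inj_on_diff)
  then show ?thesis
    unfolding M_path_def M_def B_def S_def .
qed

theorem corollary1:
  fixes V :: "'a set" and E :: "'a \<Rightarrow> 'a \<Rightarrow> bool" and u :: 'a
    and l :: nat and c d :: "nat \<Rightarrow> nat" and k :: nat
  assumes "simple_graph V E"
    and "l \<ge> 1"
    and "\<forall>i\<in>{1..l}. c i > 0 \<and> d i > 0"
    and "has_proper_end_path V E u (Max (c ` {1..l}))"
  shows "int (M k (coal_V V l d) (coal_E E u l d)) \<ge>
           int (M k V E) + (\<Sum>i=1..l. int (M_path k (c i + d i + 1)) - int (M_path k (c i + 1)))"
proof -
  obtain xs where xs: "length xs = Suc (Max (c ` {1..l}))" "distinct xs" "set xs \<subseteq> V"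
      "xs ! 0 = u" "\<forall>j. Suc j < length xs \<longrightarrow> E (xs ! j) (xs ! Suc j)"
    using assms(4) unfolding has_proper_end_path_def by auto
  have "finite V" and sym: "\<And>a b. E a b \<Longrightarrow> E b a"
    using assms(1) unfolding simple_graph_def by auto
  have "int (M_path k (c i + d i + 1)) - int (M_path k (c i + 1))
          \<le> int (card (walks_into_branch V E u l d i k))" if "i \<in> {1..l}" for i
  proof -
    have "c i < length xs" using xs(1) that by (simp add: le_imp_less_Suc)
    then show ?thesis
      using card_walks_into_branch_ge[OF \<open>finite V\<close> sym _ xs(2-5) that, of "c i" k d]
        M_path_mono[of "c i + 1" "c i + d i + 1" k]
      by simp
  qed
  then have "(\<Sum>i=1..l. int (M_path k (c i + d i + 1)) - int (M_path k (c i + 1)))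
               \<le> (\<Sum>i=1..l. int (card (walks_into_branch V E u l d i k)))"
    by (rule sum_mono)
  moreover have "int (M k V E + (\<Sum>i=1..l. card (walks_into_branch V E u l d i k)))
                   \<le> int (M k (coal_V V l d) (coal_E E u l d))"
    using M_coal_ge_branches[OF \<open>finite V\<close>] by (rule of_nat_mono)
  ultimately show ?thesis
    by simp
qed

end
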